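(* Let $R$ be a field, $S$ an idempotent semifield, and $v:R\to S$ a B\'ezout valuation with $v^\circ:R^\circ\to S^\circ$ surjective, and consider the correspondence between ideals $I\subseteq R^\circ$ and $k$-ideals $J\subseteq S^\circ$ given by $J=v(I)$, $I=v^{-1}(J)$. This correspondence preserves radical ideals and primary ideals.
   Context: An idempotent semiring is a commutative semiring with $a+a=a$, ordered by $a\le b$ iff $a+b=b$; a semifield has all nonzero elements invertible. A seminorm $v:R\to S$ satisfies $v(0)=0$, $v(1)=v(-1)=1$, $v(ab)\le v(a)v(b)$, $v(a+b)\le v(a)+v(b)$; a valuation is a multiplicative seminorm with $v(a)\ne0$ for $a\ne0$. $R^\circ=\{a:v(a)\le1\}$, $S^\circ=\{x\le1\}$, $v^\circ=v|_{R^\circ}$. $v$ is B\'ezout if for all $a,b\in R$ there are $x,y\in R^\circ$ with $v(xa+yb)=v(a)+v(b)$. Semiring ideals contain $0$ and are closed under addition and multiplication by semiring elements; a $k$-ideal $I$ satisfies: $a+b\in I$, $a\in I\Rightarrow b\in I$; prime: complement multiplicatively closed; radical: $x^n\in I\Rightarrow x\in I$; primary: $xy\in I$, $x\notin I\Rightarrow y^n\in I$ for some $n$. Under the stated hypotheses the two maps are mutually inverse bijections preserving primes. *)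

theory Defs
  imports Main
begin

definition sle :: "'s::comm_semiring_1 \<Rightarrow> 's \<Rightarrow> bool" where
  "sle a b \<longleftrightarrow> a + b = b"

definition idempotent_semifield :: "'s::comm_semiring_1 itself \<Rightarrow> bool" where
  "idempotent_semifield _ \<longleftrightarrow>
     (\<forall>a::'s. a + a = a) \<and> (\<forall>a::'s. a \<noteq> 0 \<longrightarrow> (\<exists>b. a * b = 1))"

definition seminorm :: "('r::comm_ring_1 \<Rightarrow> 's::comm_semiring_1) \<Rightarrow> bool" where
  "seminorm v \<longleftrightarrow> v 0 = 0 \<and> v 1 = 1 \<and> v (-1) = 1 \<and>
     (\<forall>a b. sle (v (a * b)) (v a * v b)) \<and>
     (\<forall>a b. sle (v (a + b)) (v a + v b))"

definition valuation :: "('r::comm_ring_1 \<Rightarrow> 's::comm_semiring_1) \<Rightarrow> bool" where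
  "valuation v \<longleftrightarrow> seminorm v \<and> (\<forall>a b. v (a * b) = v a * v b) \<and>
     (\<forall>a. a \<noteq> 0 \<longrightarrow> v a \<noteq> 0)"

definition Rcirc :: "('r::comm_ring_1 \<Rightarrow> 's::comm_semiring_1) \<Rightarrow> 'r set" where
  "Rcirc v = {a. sle (v a) 1}"

definition Scirc :: "'s::comm_semiring_1 set" where
  "Scirc = {x. sle x 1}"

definition bezout :: "('r::comm_ring_1 \<Rightarrow> 's::comm_semiring_1) \<Rightarrow> bool" where
  "bezout v \<longleftrightarrow> (\<forall>a b. \<exists>x\<in>Rcirc v. \<exists>y\<in>Rcirc v. v (x * a + y * b) = v a + v b)"

definition ring_ideal_circ :: "('r::comm_ring_1 \<Rightarrow> 's::comm_semiring_1) \<Rightarrow> 'r set \<Rightarrow> bool" where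
  "ring_ideal_circ v I \<longleftrightarrow> I \<subseteq> Rcirc v \<and> 0 \<in> I \<and>
     (\<forall>a\<in>I. \<forall>b\<in>I. a + b \<in> I) \<and> (\<forall>a\<in>I. -a \<in> I) \<and>
     (\<forall>r\<in>Rcirc v. \<forall>a\<in>I. r * a \<in> I)"

definition ring_radical_circ :: "('r::comm_ring_1 \<Rightarrow> 's::comm_semiring_1) \<Rightarrow> 'r set \<Rightarrow> bool" where
  "ring_radical_circ v I \<longleftrightarrow>
     (\<forall>x\<in>Rcirc v. \<forall>n::nat. n > 0 \<longrightarrow> x ^ n \<in> I \<longrightarrow> x \<in> I)"

definition ring_primary_circ :: "('r::comm_ring_1 \<Rightarrow> 's::comm_semiring_1) \<Rightarrow> 'r set \<Rightarrow> bool" where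
  "ring_primary_circ v I \<longleftrightarrow>
     (\<forall>x\<in>Rcirc v. \<forall>y\<in>Rcirc v. x * y \<in> I \<longrightarrow> x \<notin> I \<longrightarrow> (\<exists>n::nat. n > 0 \<and> y ^ n \<in> I))"

definition k_ideal_circ :: "'s::comm_semiring_1 set \<Rightarrow> bool" where
  "k_ideal_circ J \<longleftrightarrow> J \<subseteq> Scirc \<and> 0 \<in> J \<and>
     (\<forall>a\<in>J. \<forall>b\<in>J. a + b \<in> J) \<and>
     (\<forall>r\<in>Scirc. \<forall>a\<in>J. r * a \<in> J) \<and>
     (\<forall>a\<in>Scirc. \<forall>b\<in>Scirc. a + b \<in> J \<longrightarrow> a \<in> J \<longrightarrow> b \<in> J)"

definition semi_radical_circ :: "'s::comm_semiring_1 set \<Rightarrow> bool" where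
  "semi_radical_circ J \<longleftrightarrow>
     (\<forall>x\<in>Scirc. \<forall>n::nat. n > 0 \<longrightarrow> x ^ n \<in> J \<longrightarrow> x \<in> J)"

definition semi_primary_circ :: "'s::comm_semiring_1 set \<Rightarrow> bool" where
  "semi_primary_circ J \<longleftrightarrow>
     (\<forall>x\<in>Scirc. \<forall>y\<in>Scirc. x * y \<in> J \<longrightarrow> x \<notin> J \<longrightarrow> (\<exists>n::nat. n > 0 \<and> y ^ n \<in> J))"

end

theory Submission
  imports Defs
begin

text \<open>Two elements of R with the same value differ by a factor of value 1, i.e. by a unit
  of R\<degree>; hence every ideal I of R\<degree> is saturated, I = v\<inverse>(v(I)). Since v is
  multiplicative and maps R\<degree> onto S\<degree>, for any subset J of S the preimage v\<inverse>(J) is radical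
  (primary) in R\<degree> exactly when J is radical (primary) in S\<degree>; applied to J = v(I) this
  gives the other direction.\<close>

lemma valuation_mult:
  assumes "valuation v"
  shows "v (a * b) = v a * v b"
  using assms unfolding valuation_def by blast

lemma valuation_power:
  assumes "valuation v"
  shows "v (a ^ n) = v a ^ n"
  using assms by (induction n) (auto simp: valuation_def seminorm_def)

lemma valuation_eq_0_iff:
  assumes "valuation v"
  shows "v a = 0 \<longleftrightarrow> a = 0"
  using assms unfolding valuation_def seminorm_def by blast

lemma divide_in_Rcirc_if_valuation_eq:
  fixes v :: "'r::field \<Rightarrow> 's::comm_semiring_1"
  assumes sf: "idempotent_semifield TYPE('s)" and val: "valuation v"
    and "b \<noteq> 0" and eq: "v c = v b"
  shows "c / b \<in> Rcirc v"
proof -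
  have "v b \<noteq> 0" using val \<open>b \<noteq> 0\<close> by (simp add: valuation_eq_0_iff)
  then obtain w where w: "v b * w = 1" using sf unfolding idempotent_semifield_def by blast
  have "v (c / b) * v b = v b"
    using \<open>b \<noteq> 0\<close> eq valuation_mult[OF val, of "c / b" b, symmetric] by simp
  then have "v (c / b) = 1" using w by (metis mult.assoc mult_1_right)
  moreover have "(1::'s) + 1 = 1" using sf unfolding idempotent_semifield_def by blast
  ultimately show ?thesis unfolding Rcirc_def sle_def by simp
qed

lemma vimage_image_ring_ideal_circ:
  fixes v :: "'r::field \<Rightarrow> 's::comm_semiring_1"
  assumes sf: "idempotent_semifield TYPE('s)" and val: "valuation v"
    and I: "ring_ideal_circ v I"
  shows "v -` v ` I = I"
proof
  show "v -` v ` I \<subseteq> I"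
  proof
    fix c assume "c \<in> v -` v ` I"
    then obtain b where b: "b \<in> I" "v c = v b" by auto
    show "c \<in> I"
    proof (cases "b = 0")
      case True
      then have "c = 0" using b(2) valuation_eq_0_iff[OF val] by metis
      then show ?thesis using I unfolding ring_ideal_circ_def by blast
    next
      case False
      then have "c / b \<in> Rcirc v" using divide_in_Rcirc_if_valuation_eq[OF sf val] b by blast
      then have "c / b * b \<in> I" using I b(1) unfolding ring_ideal_circ_def by blast
      with False show ?thesis by simp
    qed
  qed
qed blast

lemma ring_radical_circ_vimage_iff:
  assumes val: "valuation v" and onto: "v ` Rcirc v = Scirc"
  shows "ring_radical_circ v (v -` J) \<longleftrightarrow> semi_radical_circ J"
proof
  assume R: "ring_radical_circ v (v -` J)"
  show "semi_radical_circ J" unfolding semi_radical_circ_def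
  proof (intro ballI allI impI)
    fix x and n :: nat assume "x \<in> Scirc" "n > 0" "x ^ n \<in> J"
    obtain a where "a \<in> Rcirc v" "x = v a" using onto \<open>x \<in> Scirc\<close> by blast
    moreover have "a ^ n \<in> v -` J" using \<open>x ^ n \<in> J\<close> \<open>x = v a\<close> by (simp add: valuation_power[OF val])
    ultimately show "x \<in> J" using R \<open>n > 0\<close> unfolding ring_radical_circ_def by blast
  qed
next
  assume R: "semi_radical_circ J"
  show "ring_radical_circ v (v -` J)" unfolding ring_radical_circ_def
  proof (intro ballI allI impI)
    fix a and n :: nat assume "a \<in> Rcirc v" "n > 0" "a ^ n \<in> v -` J"
    have "v a \<in> Scirc" using onto \<open>a \<in> Rcirc v\<close> by blast
    moreover have "v a ^ n \<in> J" using \<open>a ^ n \<in> v -` J\<close> by (simp add: valuation_power[OF val])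
    ultimately show "a \<in> v -` J" using R \<open>n > 0\<close> unfolding semi_radical_circ_def by blast
  qed
qed

lemma ring_primary_circ_vimage_iff:
  assumes val: "valuation v" and onto: "v ` Rcirc v = Scirc"
  shows "ring_primary_circ v (v -` J) \<longleftrightarrow> semi_primary_circ J"
proof
  assume P: "ring_primary_circ v (v -` J)"
  show "semi_primary_circ J" unfolding semi_primary_circ_def
  proof (intro ballI impI)
    fix x y assume "x \<in> Scirc" "y \<in> Scirc" "x * y \<in> J" "x \<notin> J"
    obtain a b where "a \<in> Rcirc v" "b \<in> Rcirc v" "x = v a" "y = v b"
      using onto \<open>x \<in> Scirc\<close> \<open>y \<in> Scirc\<close> by blast
    moreover have "a * b \<in> v -` J" "a \<notin> v -` J"
      using \<open>x * y \<in> J\<close> \<open>x \<notin> J\<close> \<open>x = v a\<close> \<open>y = v b\<close>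
      by (simp_all add: valuation_mult[OF val])
    ultimately obtain n :: nat where "n > 0" "b ^ n \<in> v -` J"
      using P unfolding ring_primary_circ_def by blast
    then show "\<exists>n::nat. n > 0 \<and> y ^ n \<in> J"
      using \<open>y = v b\<close> valuation_power[OF val] by auto
  qed
next
  assume P: "semi_primary_circ J"
  show "ring_primary_circ v (v -` J)" unfolding ring_primary_circ_def
  proof (intro ballI impI)
    fix a b assume "a \<in> Rcirc v" "b \<in> Rcirc v" "a * b \<in> v -` J" "a \<notin> v -` J"
    moreover have "v a \<in> Scirc" "v b \<in> Scirc" using onto \<open>a \<in> Rcirc v\<close> \<open>b \<in> Rcirc v\<close> by blast+
    ultimately obtain n :: nat where "n > 0" "v b ^ n \<in> J"
      using P unfolding semi_primary_circ_def by (auto simp: valuation_mult[OF val])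
    then show "\<exists>n::nat. n > 0 \<and> b ^ n \<in> v -` J" using valuation_power[OF val] by auto
  qed
qed

theorem proposition2p14:
  fixes v :: "'r::field \<Rightarrow> 's::comm_semiring_1"
  assumes "idempotent_semifield TYPE('s)"
    and "valuation v" and "bezout v"
    and "v ` Rcirc v = Scirc"
  shows "(\<forall>I. ring_ideal_circ v I \<longrightarrow>
            (ring_radical_circ v I \<longrightarrow> semi_radical_circ (v ` I)) \<and>
            (ring_primary_circ v I \<longrightarrow> semi_primary_circ (v ` I)))
       \<and> (\<forall>J. k_ideal_circ J \<longrightarrow>
            (semi_radical_circ J \<longrightarrow> ring_radical_circ v (v -` J)) \<and>
            (semi_primary_circ J \<longrightarrow> ring_primary_circ v (v -` J)))"
proof (intro conjI allI impI)
  fix I assume "ring_ideal_circ v I"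
  then have saturated: "v -` v ` I = I"
    using vimage_image_ring_ideal_circ assms(1,2) by blast
  show "semi_radical_circ (v ` I)" if "ring_radical_circ v I"
    using that ring_radical_circ_vimage_iff[OF assms(2,4), of "v ` I"] saturated by simp
  show "semi_primary_circ (v ` I)" if "ring_primary_circ v I"
    using that ring_primary_circ_vimage_iff[OF assms(2,4), of "v ` I"] saturated by simp
next
  fix J :: "'s set"
  show "ring_radical_circ v (v -` J)" if "semi_radical_circ J"
    using that ring_radical_circ_vimage_iff[OF assms(2,4)] by blast
  show "ring_primary_circ v (v -` J)" if "semi_primary_circ J"
    using that ring_primary_circ_vimage_iff[OF assms(2,4)] by blast
qed

end
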